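(* Let $G$ be a $2$-connected graph with average degree less than $3$ and with at least two vertices of degree $2$. Then $G$ contains an induced subgraph $T$ which is a tree such that every vertex of $T$ has exactly one neighbor in $V(G)\setminus V(T)$.
   Context: All graphs are finite and simple. *)

theory Defs
  imports Complex_Main
begin

definition simple_graph :: "'a set \<Rightarrow> ('a \<Rightarrow> 'a \<Rightarrow> bool) \<Rightarrow> bool" where
  "simple_graph V E \<longleftrightarrow> finite V \<and> (\<forall>u v. E u v \<longrightarrow> u \<in> V \<and> v \<in> V)
     \<and> (\<forall>u v. E u v \<longrightarrow> E v u) \<and> (\<forall>v. \<not> E v v)"

definition degree :: "'a set \<Rightarrow> ('a \<Rightarrow> 'a \<Rightarrow> bool) \<Rightarrow> 'a \<Rightarrow> nat" where
  "degree V E v = card {w \<in> V. E v w}"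

definition num_edges :: "'a set \<Rightarrow> ('a \<Rightarrow> 'a \<Rightarrow> bool) \<Rightarrow> nat" where
  "num_edges V E = card {{u, v} | u v. u \<in> V \<and> v \<in> V \<and> E u v}"

definition avg_degree :: "'a set \<Rightarrow> ('a \<Rightarrow> 'a \<Rightarrow> bool) \<Rightarrow> real" where
  "avg_degree V E = 2 * real (num_edges V E) / real (card V)"

definition connected_on :: "('a \<Rightarrow> 'a \<Rightarrow> bool) \<Rightarrow> 'a set \<Rightarrow> bool" where
  "connected_on E S \<longleftrightarrow> S \<noteq> {} \<and>
     (\<forall>u \<in> S. \<forall>v \<in> S. (\<lambda>x y. x \<in> S \<and> y \<in> S \<and> E x y)\<^sup>*\<^sup>* u v)"

definition k_connected :: "nat \<Rightarrow> 'a set \<Rightarrow> ('a \<Rightarrow> 'a \<Rightarrow> bool) \<Rightarrow> bool" where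
  "k_connected k V E \<longleftrightarrow> card V > k \<and>
     (\<forall>X. X \<subseteq> V \<and> card X < k \<longrightarrow> connected_on E (V - X))"

definition has_cycle_on :: "('a \<Rightarrow> 'a \<Rightarrow> bool) \<Rightarrow> 'a set \<Rightarrow> bool" where
  "has_cycle_on E S \<longleftrightarrow> (\<exists>cs. length cs \<ge> 3 \<and> distinct cs \<and> set cs \<subseteq> S
     \<and> (\<forall>i. Suc i < length cs \<longrightarrow> E (cs ! i) (cs ! Suc i))
     \<and> E (last cs) (hd cs))"

definition induced_tree :: "('a \<Rightarrow> 'a \<Rightarrow> bool) \<Rightarrow> 'a set \<Rightarrow> bool" where
  "induced_tree E S \<longleftrightarrow> connected_on E S \<and> \<not> has_cycle_on E S"

end

theory Submission
  imports Defs
begin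

text \<open>Delete a vertex \<open>v\<^sub>0\<close> of maximum degree and mark its neighbours. On \<open>W = V - {v\<^sub>0}\<close>
  the potential \<open>3 - deg\<^sub>W v - [v marked]\<close> of a vertex equals \<open>3 - deg v\<close>; average degree
  below \<open>3\<close>, together with \<open>deg v\<^sub>0 \<ge> 4\<close> or with two vertices of degree \<open>2\<close> in \<open>W\<close>, makes
  the total potential at least \<open>2\<close>. By induction on \<open>|W|\<close>, every connected marked \<open>W\<close> of total
  potential at least \<open>2\<close> contains an induced tree \<open>T\<close> whose vertices have exactly one
  neighbour in \<open>W - T\<close> when unmarked and none when marked; with \<open>v\<^sub>0\<close> this is the theorem.

  In a minimal counterexample every degree is at least \<open>2\<close> (small degrees give a one-vertex
  tree or a removable marked leaf), and no bridge separates two sides of positive potential (the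
  good trees of the two sides glue). Around a marked vertex grow a connected \<open>Q\<close>, maximal subject
  to a density inequality; then each component \<open>C\<close> of \<open>W - Q\<close> has potential at most \<open>1\<close> and
  at most \<open>e(C, Q) - 1\<close>, and summing bounds the total potential by \<open>1\<close>. Without marks the same
  count around a vertex of degree at least \<open>3\<close> works, and if all degrees are \<open>2\<close> an edge is a
  good tree.\<close>

section \<open>Walks and components\<close>

definition reach_in :: "('a \<Rightarrow> 'a \<Rightarrow> bool) \<Rightarrow> 'a set \<Rightarrow> 'a \<Rightarrow> 'a \<Rightarrow> bool" where
  "reach_in E S = (\<lambda>x y. x \<in> S \<and> y \<in> S \<and> E x y)\<^sup>*\<^sup>*"

lemma connected_on_iff_reach_in:
  "connected_on E S \<longleftrightarrow> S \<noteq> {} \<and> (\<forall>u\<in>S. \<forall>v\<in>S. reach_in E S u v)"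
  by (simp add: connected_on_def reach_in_def)

lemma reach_in_refl: "reach_in E S x x"
  by (simp add: reach_in_def)

lemma reach_in_edge: "x \<in> S \<Longrightarrow> y \<in> S \<Longrightarrow> E x y \<Longrightarrow> reach_in E S x y"
  by (simp add: reach_in_def r_into_rtranclp)

lemma reach_in_trans: "reach_in E S x y \<Longrightarrow> reach_in E S y z \<Longrightarrow> reach_in E S x z"
  unfolding reach_in_def by (rule rtranclp_trans)

lemma reach_in_mono: "S \<subseteq> S' \<Longrightarrow> reach_in E S x y \<Longrightarrow> reach_in E S' x y"
  unfolding reach_in_def by (erule rtranclp_mono[THEN predicate2D, rotated]) auto

lemma reach_in_sym:
  assumes sym: "\<And>x y. E x y \<Longrightarrow> E y x" and "reach_in E S x y"
  shows "reach_in E S y x"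
  using assms(2) unfolding reach_in_def
proof (induction rule: rtranclp_induct)
  case (step y z)
  then have "(\<lambda>x y. x \<in> S \<and> y \<in> S \<and> E x y) z y" using sym by auto
  from converse_rtranclp_into_rtranclp[OF this step.IH] show ?case .
qed simp

lemma reach_in_closed: "reach_in E S x y \<Longrightarrow> x \<in> S \<Longrightarrow> y \<in> S"
  unfolding reach_in_def by (induction rule: rtranclp_induct) auto

lemma reach_in_leaves:
  assumes "reach_in E S x y" "x \<in> X" "y \<notin> X"
  shows "\<exists>u\<in>X. \<exists>v\<in>S - X. E u v"
proof -
  have "y \<in> X \<or> (\<exists>u\<in>X. \<exists>v\<in>S - X. E u v)"
    using assms(1) unfolding reach_in_def
    by (induction rule: rtranclp_induct) (use assms(2) in auto)
  with assms(3) show ?thesis by blast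
qed

lemma connected_on_edge_leaving:
  assumes "connected_on E S" "x \<in> X" "X \<subseteq> S" "y \<in> S - X"
  shows "\<exists>u\<in>X. \<exists>v\<in>S - X. E u v"
  using assms by (intro reach_in_leaves[of E S x y]) (auto simp: connected_on_iff_reach_in)

lemma connected_on_singleton: "connected_on E {v}"
  by (simp add: connected_on_iff_reach_in reach_in_refl)

lemma connected_on_Un:
  assumes "connected_on E A" "connected_on E B" "A \<inter> B \<noteq> {}"
  shows "connected_on E (A \<union> B)"
proof -
  obtain c where c: "c \<in> A" "c \<in> B" using assms(3) by blast
  have "reach_in E (A \<union> B) u v" if "u \<in> A \<and> v \<in> A \<or> u \<in> B \<and> v \<in> B" for u v
    using that assms(1,2) reach_in_mono[of A "A \<union> B" E] reach_in_mono[of B "A \<union> B" E]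
    by (auto simp: connected_on_iff_reach_in)
  then show ?thesis
    unfolding connected_on_iff_reach_in using c by (blast intro: reach_in_trans)
qed

lemma connected_on_insert:
  assumes "connected_on E A" "u \<in> A" "E u v" "E v u"
  shows "connected_on E (insert v A)"
proof -
  have "connected_on E {u, v}"
    using assms(3,4) by (auto simp: connected_on_iff_reach_in intro: reach_in_refl reach_in_edge)
  from connected_on_Un[OF assms(1) this] assms(2) show ?thesis
    by (simp add: insert_absorb)
qed

text \<open>A walk in \<open>W\<close> from \<open>B\<close> that leaves \<open>B\<close> has already passed through \<open>b\<close>.\<close>
lemma connected_on_single_attachment:
  assumes sym: "\<And>x y. E x y \<Longrightarrow> E y x"
    and W: "connected_on E W" and BW: "B \<subseteq> W" and b: "b \<in> B"
    and attach: "\<And>y x. y \<in> B \<Longrightarrow> x \<in> W - B \<Longrightarrow> E y x \<Longrightarrow> y = b"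
  shows "connected_on E B"
proof -
  have to_b: "reach_in E B x b" if x: "x \<in> B" for x
  proof -
    have "y \<in> B \<and> reach_in E B x y \<or> reach_in E B x b" if "reach_in E W x y" for y
      using that unfolding reach_in_def[of E W]
    proof (induction rule: rtranclp_induct)
      case base then show ?case using x by (simp add: reach_in_refl)
    next
      case (step y z)
      then show ?case
        using attach[of y z] reach_in_edge[of y B z E] reach_in_trans[of E B x y z] by blast
    qed
    moreover have "reach_in E W x b" using W x b BW by (auto simp: connected_on_iff_reach_in)
    ultimately show ?thesis by blast
  qed
  show ?thesis
    unfolding connected_on_iff_reach_in
    using b to_b reach_in_sym[of E, OF sym to_b] by (blast intro: reach_in_trans)
qed

definition component_in :: "('a \<Rightarrow> 'a \<Rightarrow> bool) \<Rightarrow> 'a set \<Rightarrow> 'a \<Rightarrow> 'a set" where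
  "component_in E S x = {y. reach_in E S x y}"

lemma component_in_self: "x \<in> component_in E S x"
  by (simp add: component_in_def reach_in_refl)

lemma component_in_subset: "x \<in> S \<Longrightarrow> component_in E S x \<subseteq> S"
  using reach_in_closed by (auto simp: component_in_def)

lemma component_in_closed:
  "y \<in> component_in E S x \<Longrightarrow> y \<in> S \<Longrightarrow> z \<in> S \<Longrightarrow> E y z \<Longrightarrow> z \<in> component_in E S x"
  unfolding component_in_def by (blast intro: reach_in_trans reach_in_edge)

lemma component_in_eq:
  assumes sym: "\<And>x y. E x y \<Longrightarrow> E y x" and "y \<in> component_in E S x"
  shows "component_in E S y = component_in E S x"
  using assms(2) reach_in_sym[of E, OF sym] unfolding component_in_def
  by (blast intro: reach_in_trans)

lemma connected_on_component_in:
  assumes sym: "\<And>x y. E x y \<Longrightarrow> E y x"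
  shows "connected_on E (component_in E S x)"
proof -
  let ?C = "component_in E S x"
  have inner: "reach_in E ?C y z" if "reach_in E S y z" "y \<in> ?C" for y z
    using that unfolding reach_in_def[of E S]
  proof (induction rule: rtranclp_induct)
    case base then show ?case by (simp add: reach_in_refl)
  next
    case (step z w)
    have "z \<in> ?C"
      using step.hyps(1) step.prems unfolding component_in_def reach_in_def
      by (blast intro: rtranclp_trans)
    moreover have "w \<in> ?C"
      using component_in_closed[OF \<open>z \<in> ?C\<close>] step.hyps(2) by blast
    ultimately show ?case
      using step reach_in_edge[of z ?C w E] by (blast intro: reach_in_trans)
  qed
  show ?thesis
    unfolding connected_on_iff_reach_in
  proof (intro conjI ballI)
    show "?C \<noteq> {}" using component_in_self by fast
    fix u v assume "u \<in> ?C" "v \<in> ?C"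
    then have "reach_in E S u v"
      using reach_in_sym[of E, OF sym] by (auto simp: component_in_def intro: reach_in_trans)
    then show "reach_in E ?C u v" using inner \<open>u \<in> ?C\<close> by blast
  qed
qed

lemma sum_over_components:
  assumes sym: "\<And>x y. E x y \<Longrightarrow> E y x" and fin: "finite S"
  shows "sum f S = (\<Sum>C\<in>component_in E S ` S. sum f C)"
proof -
  let ?K = "component_in E S ` S"
  have "\<Union>?K = S" using component_in_subset component_in_self by fast
  moreover have "A \<inter> B = {}" if AB: "A \<in> ?K" "B \<in> ?K" "A \<noteq> B" for A B
  proof (rule ccontr)
    assume "A \<inter> B \<noteq> {}"
    then obtain y where y: "y \<in> A" "y \<in> B" by blast
    obtain a b where "A = component_in E S a" "B = component_in E S b" using AB(1,2) by blast
    with y have "A = component_in E S y" "B = component_in E S y"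
      using component_in_eq[of E, OF sym] by metis+
    with AB(3) show False by simp
  qed
  moreover have "\<forall>C\<in>?K. finite C"
    using \<open>\<Union>?K = S\<close> fin by (metis Union_upper finite_subset)
  ultimately show ?thesis
    using sum.Union_disjoint[of ?K f] unfolding pairwise_def disjnt_def by simp
qed

section \<open>Counting arcs\<close>

definition arcs :: "('a \<Rightarrow> 'a \<Rightarrow> bool) \<Rightarrow> 'a set \<Rightarrow> 'a set \<Rightarrow> ('a \<times> 'a) set" where
  "arcs E A B = {(x, y). x \<in> A \<and> y \<in> B \<and> E x y}"

lemma finite_arcs: "finite A \<Longrightarrow> finite B \<Longrightarrow> finite (arcs E A B)"
  by (rule finite_subset[of _ "A \<times> B"]) (auto simp: arcs_def)

lemma card_arcs_connected_ge:
  assumes sym: "\<And>x y. E x y \<Longrightarrow> E y x" and fin: "finite S" and conn: "connected_on E S"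
  shows "card (arcs E S S) \<ge> 2 * (card S - 1)"
proof -
  obtain x0 where x0: "x0 \<in> S" using conn by (auto simp: connected_on_iff_reach_in)
  let ?P = "\<lambda>X. X \<subseteq> S \<and> x0 \<in> X \<and> card (arcs E X X) \<ge> 2 * (card X - 1)"
  have P0: "?P {x0}" using x0 by simp
  have bound: "\<forall>X. ?P X \<longrightarrow> card X < Suc (card S)"
    using fin by (auto simp: card_mono le_imp_less_Suc)
  obtain X where PX: "?P X" and max: "\<forall>Y. ?P Y \<longrightarrow> card Y \<le> card X"
    using ex_has_greatest_nat[of ?P "{x0}" card, OF P0 bound] by blast
  have "X = S"
  proof (rule ccontr)
    assume "X \<noteq> S"
    then obtain u v where uv: "u \<in> X" "v \<in> S - X" "E u v"
      using connected_on_edge_leaving[OF conn] PX by blast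
    let ?Y = "insert v X"
    have finX: "finite X" using PX fin finite_subset by blast
    have "arcs E X X \<union> {(u, v), (v, u)} \<subseteq> arcs E ?Y ?Y"
      using uv sym by (auto simp: arcs_def)
    moreover have "finite (arcs E ?Y ?Y)" using finX by (simp add: finite_arcs)
    moreover have "card (arcs E X X \<union> {(u, v), (v, u)}) = card (arcs E X X) + 2"
    proof -
      have "(u, v) \<notin> arcs E X X" "(v, u) \<notin> arcs E X X" "(u, v) \<noteq> (v, u)"
        using uv by (auto simp: arcs_def)
      then show ?thesis using finite_arcs[OF finX finX, of E] by simp
    qed
    ultimately have "card (arcs E ?Y ?Y) \<ge> card (arcs E X X) + 2"
      using card_mono[of "arcs E ?Y ?Y" "arcs E X X \<union> {(u, v), (v, u)}"] by simp
    moreover have "card ?Y = card X + 1" "card X \<ge> 1"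
      using uv finX by (auto simp: Suc_le_eq card_gt_0_iff)
    ultimately have "?P ?Y" using PX uv by auto
    with max have "card ?Y \<le> card X" by blast
    with \<open>card ?Y = card X + 1\<close> show False by simp
  qed
  then show ?thesis using PX by simp
qed

lemma reach_in_along_path:
  assumes "\<And>i. Suc i < length cs \<Longrightarrow> E (cs ! i) (cs ! Suc i)" "set cs \<subseteq> S" "j < length cs"
  shows "reach_in E S (cs ! 0) (cs ! j)"
  using assms(3)
proof (induction j)
  case (Suc j)
  then have "reach_in E S (cs ! j) (cs ! Suc j)"
    using assms(1,2) by (intro reach_in_edge) auto
  with Suc show ?case by (auto intro: reach_in_trans)
qed (simp add: reach_in_refl)

lemma connected_on_delete_cycle_edge:
  assumes sym: "\<And>x y. E x y \<Longrightarrow> E y x" and conn: "connected_on E T"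
    and cycle: "distinct cs" "length cs \<ge> 3" "set cs \<subseteq> T"
      "\<And>i. Suc i < length cs \<Longrightarrow> E (cs ! i) (cs ! Suc i)"
  defines "E' \<equiv> \<lambda>u v. E u v \<and> {u, v} \<noteq> {last cs, hd cs}"
  shows "connected_on E' T"
proof -
  define n where "n = length cs - 1"
  have n: "n < length cs" "2 \<le> n" using cycle(2) by (auto simp: n_def)
  have "cs \<noteq> []" using cycle(2) by auto
  then have last_hd: "last cs = cs ! n" "hd cs = cs ! 0"
    by (simp_all add: n_def last_conv_nth hd_conv_nth)
  have idx: "cs ! i = cs ! j \<longleftrightarrow> i = j" if "i < length cs" "j < length cs" for i j
    using nth_eq_iff_index_eq[OF cycle(1) that] .
  have sym': "E' u v \<Longrightarrow> E' v u" for u v using sym by (auto simp: E'_def insert_commute)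
  have "E' (cs ! i) (cs ! Suc i)" if i: "Suc i < length cs" for i
  proof -
    have lt: "i < length cs" "0 < length cs" using i by auto
    have "i \<noteq> n" "\<not> (i = 0 \<and> Suc i = n)" using i n(2) by (auto simp: n_def)
    then have "{cs ! i, cs ! Suc i} \<noteq> {cs ! n, cs ! 0}"
      using idx[OF lt(1) n(1)] idx[OF i n(1)] idx[OF lt] idx[OF i lt(2)]
      by (auto simp: doubleton_eq_iff)
    then show ?thesis using cycle(4)[OF i] last_hd by (simp add: E'_def)
  qed
  from reach_in_along_path[of cs E', OF this cycle(3) n(1)]
  have closing: "reach_in E' T (hd cs) (last cs)" by (simp add: last_hd)
  have "reach_in E' T u v" if "reach_in E T u v" for u v
    using that unfolding reach_in_def[of E T]
  proof (induction rule: rtranclp_induct)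
    case (step p q)
    have "reach_in E' T p q"
    proof (cases "{p, q} = {last cs, hd cs}")
      case True
      then show ?thesis
        using closing reach_in_sym[of E', OF sym' closing] by (auto simp: doubleton_eq_iff)
    next
      case False
      then show ?thesis using step.hyps(2) by (intro reach_in_edge) (auto simp: E'_def)
    qed
    with step.IH show ?case by (rule reach_in_trans)
  qed (simp add: reach_in_refl)
  with conn show ?thesis by (auto simp: connected_on_iff_reach_in)
qed

text \<open>Otherwise deleting the closing edge of a cycle would leave a connected graph with fewer than
  \<open>2 (n - 1)\<close> arcs.\<close>
lemma induced_tree_if_card_arcs:
  assumes sym: "\<And>x y. E x y \<Longrightarrow> E y x" and fin: "finite T"
    and conn: "connected_on E T" and count: "card (arcs E T T) = 2 * (card T - 1)"
  shows "induced_tree E T"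
proof -
  have False if "has_cycle_on E T"
  proof -
    obtain cs where cycle: "distinct cs" "length cs \<ge> 3" "set cs \<subseteq> T"
      "\<And>i. Suc i < length cs \<Longrightarrow> E (cs ! i) (cs ! Suc i)" and close: "E (last cs) (hd cs)"
      using \<open>has_cycle_on E T\<close> unfolding has_cycle_on_def by blast
    define x where "x = last cs"
    define y where "y = hd cs"
    define E' where "E' = (\<lambda>u v. E u v \<and> {u, v} \<noteq> {x, y})"
    have "cs \<noteq> []" using cycle(2) by auto
    moreover have "last cs \<noteq> hd cs"
      using \<open>cs \<noteq> []\<close> cycle(2) nth_eq_iff_index_eq[OF cycle(1), of "length cs - 1" 0]
      by (simp add: last_conv_nth hd_conv_nth)
    ultimately have xy: "x \<noteq> y" "x \<in> T" "y \<in> T" "E x y"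
      using cycle(3) close by (auto simp: x_def y_def)
    have sym': "E' u v \<Longrightarrow> E' v u" for u v using sym by (auto simp: E'_def insert_commute)
    have "connected_on E' T"
      using connected_on_delete_cycle_edge[OF sym conn cycle] by (simp add: E'_def x_def y_def)
    from card_arcs_connected_ge[OF sym' fin this]
    have "card (arcs E' T T) \<ge> 2 * (card T - 1)" .
    moreover have "arcs E T T = arcs E' T T \<union> {(x, y), (y, x)}"
      using xy sym by (auto simp: arcs_def E'_def doubleton_eq_iff)
    moreover have "(x, y) \<notin> arcs E' T T" "(y, x) \<notin> arcs E' T T"
      by (auto simp: arcs_def E'_def insert_commute)
    ultimately have "card (arcs E T T) \<ge> 2 * (card T - 1) + 2"
      using finite_arcs[OF fin fin, of E'] xy(1) by (simp add: card_insert_if)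
    with count xy show False by simp
  qed
  with conn show ?thesis by (auto simp: induced_tree_def)
qed

definition nbrs :: "('a \<Rightarrow> 'a \<Rightarrow> bool) \<Rightarrow> 'a set \<Rightarrow> 'a \<Rightarrow> 'a set" where
  "nbrs E W v = {w \<in> W. E v w}"

lemma degree_eq_card_nbrs: "degree W E v = card (nbrs E W v)"
  by (simp add: degree_def nbrs_def)

lemma nbrs_subset: "nbrs E W v \<subseteq> W"
  by (auto simp: nbrs_def)

lemma nbrs_Un: "nbrs E (A \<union> B) v = nbrs E A v \<union> nbrs E B v"
  by (auto simp: nbrs_def)

lemma nbrs_Diff: "nbrs E (A - B) v = nbrs E A v - B"
  by (auto simp: nbrs_def)

locale sgraph =
  fixes V :: "'a set" and E :: "'a \<Rightarrow> 'a \<Rightarrow> bool"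
  assumes simple: "simple_graph V E"
begin

lemma finite_V: "finite V"
  using simple by (simp add: simple_graph_def)

lemma adj_sym: "E u v \<Longrightarrow> E v u"
  using simple by (simp add: simple_graph_def)

lemma adj_irrefl: "\<not> E v v"
  using simple by (simp add: simple_graph_def)

lemma finite_if_subset_V: "W \<subseteq> V \<Longrightarrow> finite W"
  using finite_V finite_subset by blast

lemma finite_nbrs: "W \<subseteq> V \<Longrightarrow> finite (nbrs E W v)"
  using finite_if_subset_V nbrs_subset finite_subset by metis

lemma finite_arcs_V: "A \<subseteq> V \<Longrightarrow> B \<subseteq> V \<Longrightarrow> finite (arcs E A B)"
  by (simp add: finite_arcs finite_if_subset_V)

lemma card_nbrs_Un:
  "A \<subseteq> V \<Longrightarrow> B \<subseteq> V \<Longrightarrow> A \<inter> B = {} \<Longrightarrow>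
    card (nbrs E (A \<union> B) v) = card (nbrs E A v) + card (nbrs E B v)"
  unfolding nbrs_Un by (intro card_Un_disjoint finite_nbrs) (auto simp: nbrs_def)

lemma card_arcs_eq_sum:
  assumes "A \<subseteq> V" "B \<subseteq> V"
  shows "card (arcs E A B) = (\<Sum>x\<in>A. card (nbrs E B x))"
proof -
  have "arcs E A B = (\<Union>x\<in>A. Pair x ` nbrs E B x)"
    by (auto simp: arcs_def nbrs_def)
  moreover have "card (\<Union>x\<in>A. Pair x ` nbrs E B x) = (\<Sum>x\<in>A. card (Pair x ` nbrs E B x))"
    using assms by (intro card_UN_disjoint) (auto simp: finite_if_subset_V finite_nbrs)
  ultimately show ?thesis by (simp add: card_image inj_on_def)
qed

lemma card_arcs_singleton: "v \<in> V \<Longrightarrow> B \<subseteq> V \<Longrightarrow> card (arcs E {v} B) = card (nbrs E B v)"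
  by (simp add: card_arcs_eq_sum)

lemma card_arcs_commute:
  assumes "A \<subseteq> V" "B \<subseteq> V"
  shows "card (arcs E A B) = card (arcs E B A)"
proof -
  have "arcs E B A = prod.swap ` arcs E A B"
    by (auto simp: arcs_def image_iff intro: adj_sym)
  then show ?thesis by (simp add: card_image)
qed

lemma card_arcs_Un_right:
  assumes "A \<subseteq> V" "B \<subseteq> V" "C \<subseteq> V" "B \<inter> C = {}"
  shows "card (arcs E A (B \<union> C)) = card (arcs E A B) + card (arcs E A C)"
proof -
  have "arcs E A (B \<union> C) = arcs E A B \<union> arcs E A C" "arcs E A B \<inter> arcs E A C = {}"
    using assms(4) by (auto simp: arcs_def)
  then show ?thesis using assms by (simp add: card_Un_disjoint finite_arcs_V)
qed

lemma card_arcs_insert: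
  assumes "v \<in> V" "A \<subseteq> V" "v \<notin> A"
  shows "card (arcs E (insert v A) (insert v A)) = card (arcs E A A) + 2 * card (nbrs E A v)"
proof -
  have vA: "{v} \<subseteq> V" "{v} \<inter> A = {}" using assms by auto
  have "arcs E (insert v A) (insert v A) = arcs E (insert v A) A \<union> arcs E A {v}"
    "arcs E (insert v A) A \<inter> arcs E A {v} = {}"
    "arcs E (insert v A) A = arcs E A A \<union> arcs E {v} A"
    "arcs E A A \<inter> arcs E {v} A = {}"
    using assms adj_irrefl by (auto simp: arcs_def)
  moreover have "card (arcs E A {v}) = card (arcs E {v} A)"
    using assms by (intro card_arcs_commute) auto
  ultimately show ?thesis
    using assms by (simp add: card_Un_disjoint finite_arcs_V card_arcs_singleton)
qed

lemma card_arcs_V: "card (arcs E V V) = 2 * num_edges V E"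
proof -
  let ?D = "{{u, v} | u v. u \<in> V \<and> v \<in> V \<and> E u v}"
  define arcs_of where "arcs_of e = {(x, y) \<in> arcs E V V. {x, y} = e}" for e
  have D: "?D = (\<lambda>(x, y). {x, y}) ` arcs E V V"
    by (auto simp: arcs_def image_iff)
  have "arcs E V V = (\<Union>e\<in>?D. arcs_of e)"
    by (auto simp: D arcs_of_def)
  moreover have "card (arcs_of e) = 2" if eD: "e \<in> ?D" for e
  proof -
    obtain u v where e: "e = {u, v}" "u \<in> V" "v \<in> V" "E u v" using eD by blast
    then have "u \<noteq> v" using adj_irrefl by blast
    moreover have "arcs_of e = {(u, v), (v, u)}"
      using e adj_sym \<open>u \<noteq> v\<close> by (auto simp: arcs_of_def arcs_def doubleton_eq_iff)
    ultimately show ?thesis by simp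
  qed
  moreover have "card (\<Union>e\<in>?D. arcs_of e) = (\<Sum>e\<in>?D. card (arcs_of e))"
  proof (rule card_UN_disjoint)
    show "finite ?D" using D finite_arcs_V by simp
    show "\<forall>e\<in>?D. finite (arcs_of e)"
      using finite_arcs_V[of V V] by (auto simp: arcs_of_def intro: rev_finite_subset)
  qed (auto simp: arcs_of_def)
  ultimately show ?thesis by (simp add: num_edges_def)
qed

section \<open>Marked instances and good trees\<close>

text \<open>Marks \<open>Z\<close> record adjacency to a deleted vertex \<open>v\<^sub>0\<close>: for \<open>W = V - {v\<^sub>0}\<close> and \<open>Z\<close> the
  neighbourhood of \<open>v\<^sub>0\<close>, the summand below is \<open>3 - degree V E v\<close>, and a marked vertex of a tree
  \<open>T \<subseteq> W\<close> already has its outside neighbour \<open>v\<^sub>0\<close>. The arc count of a good tree makes it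
  an induced tree by \<open>induced_tree_if_card_arcs\<close>.\<close>
definition potential :: "'a set \<Rightarrow> 'a set \<Rightarrow> 'a set \<Rightarrow> int" where
  "potential W Z A = (\<Sum>v\<in>A. 3 - int (degree W E v) - of_bool (v \<in> Z))"

definition good_tree :: "'a set \<Rightarrow> 'a set \<Rightarrow> 'a set \<Rightarrow> bool" where
  "good_tree W Z T \<longleftrightarrow> T \<subseteq> W \<and> connected_on E T \<and> card (arcs E T T) = 2 * (card T - 1) \<and>
     (\<forall>v\<in>T. of_bool (v \<in> Z) + card (nbrs E (W - T) v) = 1)"

text \<open>The last clause excludes a single unmarked vertex, which has potential \<open>3\<close> but no good tree.\<close>
definition admissible :: "'a set \<Rightarrow> 'a set \<Rightarrow> bool" where
  "admissible W Z \<longleftrightarrow> W \<subseteq> V \<and> connected_on E W \<and> (card W = 1 \<longrightarrow> W \<subseteq> Z)"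

definition sole_edge :: "'a set \<Rightarrow> 'a set \<Rightarrow> 'a \<Rightarrow> 'a \<Rightarrow> bool" where
  "sole_edge A B a b \<longleftrightarrow> a \<in> A \<and> b \<in> B \<and> E a b \<and> (\<forall>x\<in>A. \<forall>y\<in>B. E x y \<longrightarrow> x = a \<and> y = b)"

lemma sole_edge_commute: "sole_edge A B a b \<Longrightarrow> sole_edge B A b a"
  unfolding sole_edge_def by (meson adj_sym)

lemma potential_Un:
  "finite A \<Longrightarrow> finite B \<Longrightarrow> A \<inter> B = {} \<Longrightarrow> potential W Z (A \<union> B) = potential W Z A + potential W Z B"
  unfolding potential_def by (rule sum.union_disjoint)

lemma potential_eq:
  assumes "A \<subseteq> V" "W \<subseteq> V"
  shows "potential W Z A = 3 * int (card A) - int (card (arcs E A W)) - int (card (A \<inter> Z))"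
proof -
  have "finite A" using assms finite_if_subset_V by blast
  then have "(\<Sum>v\<in>A. of_bool (v \<in> Z) :: int) = int (card (A \<inter> Z))"
    by (simp add: Int_def)
  moreover have "(\<Sum>v\<in>A. int (degree W E v)) = int (card (arcs E A W))"
    using card_arcs_eq_sum[OF assms] by (simp add: degree_eq_card_nbrs)
  ultimately show ?thesis by (simp add: potential_def sum_subtractf)
qed

lemma good_tree_singleton:
  assumes "v \<in> W" "degree W E v + of_bool (v \<in> Z) = 1"
  shows "good_tree W Z {v}"
proof -
  have "nbrs E (W - {v}) v = nbrs E W v" "arcs E {v} {v} = {}"
    using adj_irrefl by (auto simp: nbrs_def arcs_def)
  then show ?thesis
    using assms connected_on_singleton by (auto simp: good_tree_def degree_eq_card_nbrs)
qed

lemma good_tree_boundary: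
  "good_tree W Z T \<Longrightarrow> v \<in> T \<Longrightarrow> of_bool (v \<in> Z) + card (nbrs E (W - T) v) = 1"
  unfolding good_tree_def by blast

lemma good_tree_lift:
  assumes "good_tree C Z' T" "C \<subseteq> W"
    and "\<And>v. v \<in> T \<Longrightarrow>
      of_bool (v \<in> Z') + card (nbrs E (C - T) v) = of_bool (v \<in> Z) + card (nbrs E (W - T) v)"
  shows "good_tree W Z T"
  using assms by (auto simp: good_tree_def)

lemma nbrs_sole_edge_side:
  assumes "A \<union> B = W" "A \<inter> B = {}" "sole_edge A B a b" "v \<in> A"
  shows "nbrs E W v = nbrs E (insert b A) v"
  using assms by (auto simp: nbrs_def sole_edge_def)

lemma nbrs_sole_edge_end:
  assumes "A \<inter> B = {}" "sole_edge A B a b"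
  shows "nbrs E (insert b A) b = {a}"
proof -
  have "u = a" if "u \<in> A" "E b u" for u
    using assms that adj_sym[OF that(2)] by (auto simp: sole_edge_def)
  then show ?thesis using assms adj_irrefl adj_sym[of a b] by (auto simp: nbrs_def sole_edge_def)
qed

lemma nbrs_eq_singletonD:
  assumes "nbrs E W p = {q}"
  shows "q \<in> W" "E p q" "E q p" "\<And>v. v \<in> W \<Longrightarrow> E v p \<Longrightarrow> v = q"
proof -
  show "q \<in> W" "E p q" using assms by (auto simp: nbrs_def)
  then show "E q p" using adj_sym by blast
  show "v = q" if "v \<in> W" "E v p" for v
    using assms that(1) adj_sym[OF that(2)] by (auto simp: nbrs_def)
qed

lemma good_tree_add_marked_leaf:
  assumes T': "good_tree W' Z T'" and W: "W = insert p W'" "W \<subseteq> V" "p \<notin> W'"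
    and leaf: "nbrs E W p = {q}" and marked: "p \<in> Z"
  shows "\<exists>T. good_tree W Z T"
proof -
  note q = nbrs_eq_singletonD[OF leaf]
  have T'W': "T' \<subseteq> W'" and conn: "connected_on E T'"
    and count: "card (arcs E T' T') = 2 * (card T' - 1)"
    and boundary: "\<And>v. v \<in> T' \<Longrightarrow> of_bool (v \<in> Z) + card (nbrs E (W' - T') v) = 1"
    using T' by (auto simp: good_tree_def)
  show ?thesis
  proof (cases "q \<in> T'")
    case False
    have "nbrs E (W' - T') v = nbrs E (W - T') v" if "v \<in> T'" for v
    proof -
      have "\<not> E v p" using q(4) that False T'W' W(1) by blast
      then show ?thesis using W(1) by (auto simp: nbrs_def)
    qed
    then have "good_tree W Z T'"
      using W(1) by (intro good_tree_lift[OF T']) auto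
    then show ?thesis by blast
  next
    case True
    have fin: "finite T'" using T'W' W finite_if_subset_V by blast
    have pT': "p \<notin> T'" using T'W' W(3) by blast
    have "nbrs E T' p = {q}" using leaf True T'W' W(1) by (auto simp: nbrs_def)
    then have "card (arcs E (insert p T') (insert p T')) = card (arcs E T' T') + 2"
      using card_arcs_insert[of p T'] T'W' W by auto
    moreover have "card (insert p T') = card T' + 1" "card T' \<ge> 1"
      using fin True pT' by (auto simp: Suc_le_eq card_gt_0_iff)
    moreover have "connected_on E (insert p T')"
      using connected_on_insert[OF conn True q(3,2)] .
    moreover have "of_bool (v \<in> Z) + card (nbrs E (W - insert p T') v) = 1"
      if "v \<in> insert p T'" for v
    proof (cases "v = p")
      case True
      have "nbrs E (W - insert p T') p = {}" using leaf \<open>q \<in> T'\<close> by (auto simp: nbrs_def)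
      then show ?thesis using True marked by simp
    next
      case False
      have "W - insert p T' = W' - T'" using W(1,3) by blast
      then show ?thesis using boundary False that by simp
    qed
    ultimately have "good_tree W Z (insert p T')"
      using count T'W' W(1) by (auto simp: good_tree_def)
    then show ?thesis by blast
  qed
qed

lemma good_tree_half_lift:
  assumes AB: "A \<union> B = W" "A \<inter> B = {}" and sole: "sole_edge A B a b"
    and T: "good_tree (insert b A) (insert b (Z \<inter> A)) T" and bT: "b \<notin> T"
  shows "good_tree W Z T"
proof (rule good_tree_lift[OF T])
  show "insert b A \<subseteq> W" using AB sole by (auto simp: sole_edge_def)
  fix v assume "v \<in> T"
  then have vA: "v \<in> A" using T bT by (auto simp: good_tree_def)
  then have "v \<noteq> b" using AB sole by (auto simp: sole_edge_def)
  then show "of_bool (v \<in> insert b (Z \<inter> A)) + card (nbrs E (insert b A - T) v) =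
      of_bool (v \<in> Z) + card (nbrs E (W - T) v)"
    using vA nbrs_sole_edge_side[OF AB sole vA] by (simp add: nbrs_Diff)
qed

lemma good_tree_half_contains:
  assumes T: "good_tree (insert b A) (insert b (Z \<inter> A)) T" and bT: "b \<in> T"
    and A: "A \<subseteq> V" "a \<in> A" and ab: "E a b"
  shows "a \<in> T"
proof (rule ccontr)
  assume "a \<notin> T"
  then have "a \<in> nbrs E (insert b A - T) b" using A adj_sym[OF ab] by (auto simp: nbrs_def)
  moreover have "finite (nbrs E (insert b A - T) b)"
    using finite_if_subset_V[OF A(1)] by (auto simp: nbrs_def)
  ultimately have "card (nbrs E (insert b A - T) b) \<ge> 1"
    by (auto simp: Suc_le_eq card_gt_0_iff)
  then show False using T bT by (auto simp: good_tree_def)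
qed

lemma good_tree_half_boundary:
  assumes AB: "A \<union> B = W" "A \<inter> B = {}" and sole: "sole_edge A B a b"
    and TA: "good_tree (insert b A) (insert b (Z \<inter> A)) TA" "a \<in> TA" "b \<in> TA"
    and TB: "TB \<subseteq> insert a B" and v: "v \<in> A" "v \<in> TA"
  shows "of_bool (v \<in> Z) + card (nbrs E (W - (TA \<union> TB)) v) = 1"
proof -
  have "nbrs E (W - (TA \<union> TB)) v = nbrs E (insert b A) v - (TA \<union> TB)"
    using nbrs_sole_edge_side[OF AB sole v(1)] by (simp add: nbrs_Diff)
  also have "\<dots> = nbrs E (insert b A - TA) v"
    using TB AB(2) TA(2,3) by (auto simp: nbrs_def)
  moreover have "v \<noteq> b" using v(1) AB(2) sole unfolding sole_edge_def by blast
  ultimately show ?thesis using good_tree_boundary[OF TA(1) v(2)] v(1) by simp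
qed

text \<open>The two trees overlap exactly in the edge \<open>ab\<close>, so their arc counts and boundaries add up.\<close>
lemma good_tree_glue:
  assumes AB: "A \<union> B = W" "A \<inter> B = {}" "W \<subseteq> V" and sole: "sole_edge A B a b"
    and TA: "good_tree (insert b A) (insert b (Z \<inter> A)) TA" "a \<in> TA" "b \<in> TA"
    and TB: "good_tree (insert a B) (insert a (Z \<inter> B)) TB" "a \<in> TB" "b \<in> TB"
  shows "good_tree W Z (TA \<union> TB)"
proof -
  let ?T = "TA \<union> TB"
  have ab: "a \<in> A" "b \<in> B" "E a b" "a \<noteq> b" using sole AB(2) by (auto simp: sole_edge_def)
  have TA_sub: "TA \<subseteq> insert b A" and TB_sub: "TB \<subseteq> insert a B"
    using TA(1) TB(1) by (auto simp: good_tree_def)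
  have meet: "TA \<inter> TB = {a, b}" using TA_sub TB_sub AB(2) TA TB by blast
  have "insert b A \<subseteq> V" "insert a B \<subseteq> V" using AB ab by auto
  then have finite: "finite TA" "finite TB"
    using TA_sub TB_sub finite_if_subset_V by (metis subset_trans)+
  have "card TA \<ge> 2" "card TB \<ge> 2"
    using finite TA(2,3) TB(2,3) ab(4) card_mono[of TA "{a, b}"] card_mono[of TB "{a, b}"] by auto
  moreover have "card ?T + 2 = card TA + card TB"
    using card_Un_Int[OF finite] meet ab(4) by simp
  moreover have "arcs E ?T ?T = arcs E TA TA \<union> arcs E TB TB"
  proof -
    have "x \<in> TA \<and> y \<in> TA \<or> x \<in> TB \<and> y \<in> TB" if "x \<in> ?T" "y \<in> ?T" "E x y" for x y
      using that sole meet TA_sub TB_sub adj_sym[OF that(3)] unfolding sole_edge_def by blast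
    then show ?thesis by (auto simp: arcs_def)
  qed
  moreover have "arcs E TA TA \<inter> arcs E TB TB = arcs E {a, b} {a, b}"
    using meet by (auto simp: arcs_def)
  moreover have "arcs E {a, b} {a, b} = {(a, b), (b, a)}"
    using ab adj_sym[OF ab(3)] adj_irrefl by (auto simp: arcs_def)
  moreover have "finite (arcs E TA TA)" "finite (arcs E TB TB)"
    using finite by (simp_all add: finite_arcs)
  ultimately have count: "card (arcs E ?T ?T) = 2 * (card ?T - 1)"
    using TA(1) TB(1) card_Un_Int[of "arcs E TA TA" "arcs E TB TB"] ab(4)
    by (simp add: good_tree_def)
  have boundary: "of_bool (v \<in> Z) + card (nbrs E (W - ?T) v) = 1" if "v \<in> ?T" for v
  proof -
    have "v \<in> A \<and> v \<in> TA \<or> v \<in> B \<and> v \<in> TB" using that TA_sub TB_sub meet ab by blast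
    moreover have BA: "B \<union> A = W" "B \<inter> A = {}" using AB by auto
    ultimately show ?thesis
      using good_tree_half_boundary[OF AB(1,2) sole TA TB_sub, of v]
        good_tree_half_boundary[OF BA sole_edge_commute[OF sole] TB(1,3,2) TA_sub, of v]
      by (auto simp: Un_commute)
  qed
  moreover   have "connected_on E TA" "connected_on E TB" using TA(1) TB(1) by (simp_all add: good_tree_def)
  then have "connected_on E ?T" using meet by (intro connected_on_Un) auto
  ultimately show ?thesis
    using count TA_sub TB_sub AB ab by (auto simp: good_tree_def)
qed

text \<open>Take \<open>Q\<close> as large as possible: a vertex with two links to \<open>Q\<close>, a mark counting as a link,
  could be added without violating the inequality.\<close>
lemma saturated_subgraph_exists:
  assumes W: "W \<subseteq> V" and w: "w \<in> W" "w \<in> Z"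
  obtains Q where "Q \<subseteq> W" "w \<in> Q" "connected_on E Q"
    "int (card (arcs E Q Q)) + 2 * int (card (Q \<inter> Z)) \<ge> 4 * int (card Q) - 2"
    "\<And>v. v \<in> W - Q \<Longrightarrow> of_bool (v \<in> Z) + card (nbrs E Q v) \<le> 1"
proof -
  let ?Inv = "\<lambda>Q. Q \<subseteq> W \<and> w \<in> Q \<and> connected_on E Q \<and>
    int (card (arcs E Q Q)) + 2 * int (card (Q \<inter> Z)) \<ge> 4 * int (card Q) - 2"
  have init: "?Inv {w}" using w connected_on_singleton by (simp add: arcs_def adj_irrefl)
  have bound: "\<forall>Q. ?Inv Q \<longrightarrow> card Q < Suc (card W)"
    using finite_if_subset_V[OF W] by (auto simp: card_mono le_imp_less_Suc)
  obtain Q where Q: "?Inv Q" and max: "\<forall>Q'. ?Inv Q' \<longrightarrow> card Q' \<le> card Q"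
    using ex_has_greatest_nat[of ?Inv "{w}" card, OF init bound] by blast
  have QV: "Q \<subseteq> V" and finQ: "finite Q" using Q W finite_if_subset_V by auto
  have "of_bool (v \<in> Z) + card (nbrs E Q v) \<le> 1" if v: "v \<in> W - Q" for v
  proof (rule ccontr)
    assume many: "\<not> ?thesis"
    then have "nbrs E Q v \<noteq> {}" by (cases "v \<in> Z") auto
    then obtain u where u: "u \<in> Q" "E v u" by (auto simp: nbrs_def)
    have vV: "v \<in> V" "v \<notin> Q" using v W by auto
    have "connected_on E (insert v Q)"
      using connected_on_insert[OF _ u(1) adj_sym[OF u(2)] u(2)] Q by blast
    moreover have "card (arcs E (insert v Q) (insert v Q)) = card (arcs E Q Q) + 2 * card (nbrs E Q v)"
      using card_arcs_insert[OF vV(1) QV vV(2)] .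
    moreover have "card (insert v Q) = card Q + 1" using vV finQ by simp
    moreover have "int (card (insert v Q \<inter> Z)) = int (card (Q \<inter> Z)) + of_bool (v \<in> Z)"
      using vV finQ by (cases "v \<in> Z") (simp_all add: Int_insert_left)
    ultimately have "?Inv (insert v Q)" using Q v many by auto
    with max have "card (insert v Q) \<le> card Q" by blast
    with \<open>card (insert v Q) = card Q + 1\<close> show False by simp
  qed
  with Q show thesis using that by blast
qed

end

section \<open>A minimal counterexample\<close>

locale minimal_counterexample = sgraph +
  fixes W Z :: "'a set"
  assumes admissible: "admissible W Z"
    and potential_W: "potential W Z W \<ge> 2"
    and no_good_tree: "\<And>T. \<not> good_tree W Z T"
    and smaller_instances: "\<And>W' Z'. card W' < card W \<Longrightarrow> admissible W' Z' \<Longrightarrow>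
      potential W' Z' W' \<ge> 2 \<Longrightarrow> \<exists>T. good_tree W' Z' T"
begin

lemma W_subset_V: "W \<subseteq> V"
  using admissible by (simp add: admissible_def)

lemma finite_W: "finite W"
  using W_subset_V finite_if_subset_V by blast

lemma connected_W: "connected_on E W"
  using admissible by (simp add: admissible_def)

lemma degree_plus_mark_ge_2:
  assumes v: "v \<in> W"
  shows "2 \<le> degree W E v + of_bool (v \<in> Z)"
proof (rule ccontr)
  assume "\<not> ?thesis"
  moreover have "degree W E v + of_bool (v \<in> Z) \<noteq> 1"
    using good_tree_singleton[OF v] no_good_tree by blast
  ultimately have "degree W E v = 0" and unmarked: "v \<notin> Z" by auto
  then have "nbrs E W v = {}"
    using finite_nbrs[OF W_subset_V, of v] by (simp add: degree_eq_card_nbrs)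
  have "W = {v}"
  proof (rule ccontr)
    assume "W \<noteq> {v}"
    then obtain u where "u \<in> W - {v}" using v by blast
    then have "\<exists>y\<in>W. E v y" using connected_on_edge_leaving[OF connected_W, of v "{v}"] v by auto
    then show False using \<open>nbrs E W v = {}\<close> by (auto simp: nbrs_def)
  qed
  then show False using admissible unmarked by (auto simp: admissible_def)
qed

text \<open>A marked leaf \<open>p\<close> can be deleted without changing the potential, and a good tree of
  \<open>W - {p}\<close> extends to one of \<open>W\<close>.\<close>
lemma no_marked_leaf:
  assumes p: "p \<in> W" and leaf: "nbrs E W p = {q}" and marked: "p \<in> Z"
  shows False
proof -
  note q = nbrs_eq_singletonD[OF leaf]
  define W' where "W' = W - {p}"
  have W: "W = insert p W'" "p \<notin> W'" "q \<in> W'" "W' \<subseteq> V"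
    using p q(1,2) adj_irrefl W_subset_V by (auto simp: W'_def)
  have "connected_on E W'"
    using q(4) W(3) by (intro connected_on_single_attachment[OF adj_sym connected_W, of W' q])
      (auto simp: W'_def)
  moreover have "W' \<subseteq> Z" if "card W' = 1"
  proof -
    have "W' = {q}" using that W(3) by (auto simp: card_1_singleton_iff)
    then have "nbrs E W q = {p}" using W(1) q(3) adj_irrefl by (auto simp: nbrs_def)
    then show ?thesis using degree_plus_mark_ge_2[of q] W(1,3) \<open>W' = {q}\<close>
      by (auto simp: degree_eq_card_nbrs of_bool_def split: if_splits)
  qed
  ultimately have "admissible W' Z" using W by (simp add: admissible_def)
  moreover have "potential W' Z W' = potential W Z W"
  proof -
    have "nbrs E W' p = {q}" using leaf W by (auto simp: nbrs_def)
    then have "card (arcs E W W) = card (arcs E W' W') + 2"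
      using card_arcs_insert[of p W'] W W_subset_V by simp
    moreover have "card W = card W' + 1" "card (W \<inter> Z) = card (W' \<inter> Z) + 1"
      using W finite_if_subset_V[OF W(4)] marked by (simp_all add: Int_insert_left)
    ultimately show ?thesis
      using potential_eq[OF W(4) W(4)] potential_eq[OF W_subset_V W_subset_V] by simp
  qed
  moreover have "card W' < card W" using W finite_W by simp
  ultimately obtain T' where "good_tree W' Z T'"
    using smaller_instances[of W' Z] potential_W by auto
  then show False
    using good_tree_add_marked_leaf[of W' Z T' W p q] W W_subset_V leaf marked no_good_tree by blast
qed

lemma degree_ge_2:
  assumes v: "v \<in> W"
  shows "degree W E v \<ge> 2"
proof (rule ccontr)
  assume "\<not> ?thesis"
  then have "degree W E v = 1" "v \<in> Z"
    using degree_plus_mark_ge_2[OF v] by (auto simp: of_bool_def split: if_splits)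
  then obtain q where "nbrs E W v = {q}" by (auto simp: degree_eq_card_nbrs card_1_singleton_iff)
  then show False using no_marked_leaf v \<open>v \<in> Z\<close> by blast
qed

lemma bridge_half_tree:
  assumes AB: "A \<union> B = W" "A \<inter> B = {}" and sole: "sole_edge A B a b"
    and A: "connected_on E A" "potential W Z A \<ge> 1" and B: "card B \<ge> 2"
  obtains T where "good_tree (insert b A) (insert b (Z \<inter> A)) T" "a \<in> T" "b \<in> T"
proof -
  let ?W = "insert b A" and ?Z = "insert b (Z \<inter> A)"
  have ab: "a \<in> A" "b \<in> B" "E a b" "b \<notin> A" using sole AB(2) by (auto simp: sole_edge_def)
  have sub: "A \<subseteq> V" "?W \<subseteq> V" using AB ab W_subset_V by auto
  then have fin: "finite A" "finite B" using AB finite_W finite_subset by auto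
  have "card ?W < card W"
    using B fin ab AB card_Un_disjoint[of A B] by simp
  moreover have "admissible ?W ?Z"
    using sub connected_on_insert[OF A(1) ab(1,3) adj_sym[OF ab(3)]] ab
    by (auto simp: admissible_def card_insert_if fin)
  moreover have "potential ?W ?Z ?W \<ge> 2"
  proof -
    have "potential ?W ?Z A = potential W Z A"
      unfolding potential_def degree_eq_card_nbrs
      using nbrs_sole_edge_side[OF AB sole] ab by (intro sum.cong) auto
    moreover have "potential ?W ?Z {b} = 1"
      using nbrs_sole_edge_end[OF AB(2) sole] by (simp add: potential_def degree_eq_card_nbrs)
    ultimately show ?thesis
      using potential_Un[of "{b}" A] fin ab A(2) by simp
  qed
  ultimately obtain T where T: "good_tree ?W ?Z T" using smaller_instances by blast
  moreover have "b \<in> T" using good_tree_half_lift[OF AB sole T] no_good_tree by blast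
  moreover have "a \<in> T" using good_tree_half_contains[OF T \<open>b \<in> T\<close> sub(1) ab(1,3)] .
  ultimately show thesis using that by blast
qed

text \<open>Each side, with the far end of the bridge as a marked leaf, is a smaller instance; the good
  trees of the two sides glue.\<close>
lemma no_bridge:
  assumes AB: "A \<union> B = W" "A \<inter> B = {}" and sole: "sole_edge A B a b"
    and conn: "connected_on E A" "connected_on E B" and card: "card A \<ge> 2" "card B \<ge> 2"
    and potential: "potential W Z A \<ge> 1" "potential W Z B \<ge> 1"
  shows False
proof -
  have BA: "B \<union> A = W" "B \<inter> A = {}" using AB by auto
  obtain TA where "good_tree (insert b A) (insert b (Z \<inter> A)) TA" "a \<in> TA" "b \<in> TA"
    using bridge_half_tree[OF AB sole conn(1) potential(1) card(2)] .
  moreover obtain TB where "good_tree (insert a B) (insert a (Z \<inter> B)) TB" "a \<in> TB" "b \<in> TB"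
    using bridge_half_tree[OF BA sole_edge_commute[OF sole] conn(2) potential(2) card(1)] .
  ultimately show False
    using good_tree_glue[OF AB W_subset_V sole] no_good_tree by blast
qed

context
  fixes Q C :: "'a set" and x :: 'a
  assumes Q: "Q \<subseteq> W" "Q \<noteq> {}" and x: "x \<in> W - Q"
    and closed: "\<And>v. v \<in> W - Q \<Longrightarrow> of_bool (v \<in> Z) + card (nbrs E Q v) \<le> 1"
    and C: "C = component_in E (W - Q) x"
begin

lemma component_subset: "C \<subseteq> W - Q"
  using component_in_subset[OF x] C by simp

lemma connected_component: "connected_on E C"
  using connected_on_component_in[OF adj_sym] C by simp

lemma component_closed: "v \<in> C \<Longrightarrow> u \<in> W \<Longrightarrow> E v u \<Longrightarrow> u \<notin> Q \<Longrightarrow> u \<in> C"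
  using component_in_closed[of v E "W - Q" x u] component_subset C by blast

lemma degree_component:
  assumes v: "v \<in> C"
  shows "degree W E v = degree C E v + card (nbrs E Q v)"
proof -
  have "nbrs E W v = nbrs E (C \<union> Q) v"
    using component_closed[OF v] component_subset Q by (auto simp: nbrs_def)
  moreover have "C \<inter> Q = {}" "C \<subseteq> V" "Q \<subseteq> V" using component_subset Q W_subset_V by auto
  ultimately show ?thesis by (simp add: degree_eq_card_nbrs card_nbrs_Un)
qed

text \<open>By \<open>closed\<close> and \<open>degree_ge_2\<close>, every vertex of \<open>C\<close> has a neighbour in \<open>C\<close>.\<close>
lemma card_component_ge_2: "card C \<ge> 2"
proof -
  have xC: "x \<in> C" using component_in_self C by fast
  then have "degree C E x \<ge> 1"
    using degree_component[OF xC] degree_ge_2[of x] closed[OF x] x by auto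
  then have "nbrs E C x \<noteq> {}" by (auto simp: degree_eq_card_nbrs)
  then obtain u where "u \<in> C" "E x u" by (auto simp: nbrs_def)
  moreover have "finite C" using component_subset finite_W finite_subset by blast
  ultimately show ?thesis
    using xC adj_irrefl card_mono[of C "{x, u}"] by (cases "u = x") auto
qed

lemma potential_component_le_1: "potential W Z C \<le> 1"
proof (rule ccontr)
  assume "\<not> ?thesis"
  define ZC where "ZC = {v \<in> C. of_bool (v \<in> Z) + card (nbrs E Q v) = 1}"
  have CW: "C \<subseteq> W" "C \<subseteq> V" using component_subset W_subset_V by auto
  have mark: "of_bool (v \<in> ZC) = of_bool (v \<in> Z) + card (nbrs E Q v)" if "v \<in> C" for v
    using closed[of v] that component_subset by (auto simp: ZC_def)
  have "int (degree C E v) + of_bool (v \<in> ZC) = int (degree W E v) + of_bool (v \<in> Z)"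
    if "v \<in> C" for v
  proof -
    have "degree C E v + of_bool (v \<in> ZC) = degree W E v + of_bool (v \<in> Z)"
      using degree_component[OF that] mark[OF that] by linarith
    then show ?thesis by (metis of_nat_add of_nat_of_bool)
  qed
  then have "potential C ZC C = potential W Z C"
    unfolding potential_def by (intro sum.cong) (auto simp: algebra_simps)
  moreover have "admissible C ZC"
    using CW connected_component card_component_ge_2 by (auto simp: admissible_def)
  moreover have "C \<subset> W" using component_subset Q by blast
  then have "card C < card W" using finite_W by (rule psubset_card_mono[rotated])
  ultimately obtain T where T: "good_tree C ZC T"
    using smaller_instances \<open>\<not> potential W Z C \<le> 1\<close> by fastforce
  have "good_tree W Z T"
  proof (rule good_tree_lift[OF T CW(1)])
    fix v assume "v \<in> T"
    have TC: "T \<subseteq> C" using T by (simp add: good_tree_def)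
    then have v: "v \<in> C" using \<open>v \<in> T\<close> by blast
    have "nbrs E (W - T) v = nbrs E ((C - T) \<union> Q) v"
      using component_closed[OF v] component_subset Q TC by (auto simp: nbrs_def)
    moreover have "(C - T) \<inter> Q = {}" "C - T \<subseteq> V" "Q \<subseteq> V"
      using CW Q W_subset_V component_subset by auto
    ultimately show "of_bool (v \<in> ZC) + card (nbrs E (C - T) v) =
        of_bool (v \<in> Z) + card (nbrs E (W - T) v)"
      using mark[OF v] by (simp add: card_nbrs_Un)
  qed
  then show False using no_good_tree by blast
qed

text \<open>A single edge from \<open>C\<close> to \<open>Q\<close> is a bridge of \<open>W\<close>; \<open>no_bridge\<close> then forbids potential \<open>1\<close>.\<close>
lemma component_single_arc:
  assumes arcs: "arcs E C Q = {(c, q)}"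
  shows "potential W Z C \<noteq> 1"
proof
  assume pot: "potential W Z C = 1"
  have CW: "C \<subseteq> W" using component_subset by blast
  have "(c, q) \<in> arcs E C Q" using arcs by simp
  then have cq: "c \<in> C" "q \<in> Q" "E c q" by (auto simp: arcs_def)
  then have "q \<in> W - C" using Q(1) component_subset by blast
  note cq = cq this
  have only: "x' = c \<and> y = q" if "x' \<in> C" "y \<in> W - C" "E x' y" for x' y
  proof -
    have "y \<in> Q" using component_closed[OF that(1), of y] that(2,3) by blast
    then have "(x', y) \<in> arcs E C Q" using that by (simp add: arcs_def)
    then show ?thesis using arcs by simp
  qed
  then have sole: "sole_edge C (W - C) c q" using cq unfolding sole_edge_def by blast
  have conn: "connected_on E (W - C)"
  proof (rule connected_on_single_attachment[OF adj_sym connected_W])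
    show "W - C \<subseteq> W" "q \<in> W - C" using cq by auto
    fix y x' assume "y \<in> W - C" "x' \<in> W - (W - C)" "E y x'"
    then show "y = q" using only[of x' y] adj_sym[of y x'] by blast
  qed
  have "card (W - C) \<ge> 2"
  proof -
    have "degree W E q \<ge> 2" using degree_ge_2 cq by blast
    then have "\<not> nbrs E W q \<subseteq> {c}"
      using card_mono[of "{c}" "nbrs E W q"] by (auto simp: degree_eq_card_nbrs)
    then obtain u where u: "u \<in> W" "E q u" "u \<noteq> c" by (auto simp: nbrs_def)
    have "u \<notin> C"
    proof
      assume "u \<in> C"
      then have "(u, q) \<in> arcs E C Q" using cq(2) adj_sym[OF u(2)] by (simp add: arcs_def)
      with arcs u(3) show False by simp
    qed
    moreover have "u \<noteq> q" using u(2) adj_irrefl by blast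
    ultimately show ?thesis
      using u cq finite_W card_mono[of "W - C" "{q, u}"] by auto
  qed
  moreover have "potential W Z (W - C) \<ge> 1"
  proof -
    have "finite C" using CW finite_W finite_subset by blast
    then have "potential W Z W = potential W Z C + potential W Z (W - C)"
      using potential_Un[of C "W - C" W Z] CW finite_W by (simp add: Un_absorb1)
    then show ?thesis using potential_W pot by simp
  qed
  ultimately show False
    using no_bridge[OF _ _ sole connected_component conn card_component_ge_2] pot CW by auto
qed

lemma potential_component_lt_arcs: "potential W Z C + 1 \<le> int (card (arcs E C Q))"
proof -
  have CW: "C \<subseteq> W" "C \<subseteq> V" "Q \<subseteq> V" using component_subset Q W_subset_V by auto
  have xC: "x \<in> C" using component_in_self C by fast
  obtain q0 where "q0 \<in> W - C" using Q component_subset by blast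
  then obtain c q where cq: "c \<in> C" "q \<in> W - C" "E c q"
    using connected_on_edge_leaving[OF connected_W xC CW(1)] by blast
  then have "q \<in> Q" using component_closed by blast
  then have "(c, q) \<in> arcs E C Q" using cq by (simp add: arcs_def)
  then have "card (arcs E C Q) \<ge> 1"
    using finite_arcs_V[OF CW(2,3)] by (auto simp: Suc_le_eq card_gt_0_iff)
  then show ?thesis
  proof (cases "card (arcs E C Q) = 1")
    case True
    then obtain c' q' where "arcs E C Q = {(c', q')}" by (auto simp: card_1_singleton_iff)
    then have "potential W Z C \<noteq> 1" by (rule component_single_arc)
    with potential_component_le_1 True show ?thesis by presburger
  qed (use potential_component_le_1 in linarith)
qed

end

lemma potential_outside_bound:
  assumes Q: "Q \<subseteq> W" "Q \<noteq> {}" "W - Q \<noteq> {}"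
    and closed: "\<And>v. v \<in> W - Q \<Longrightarrow> of_bool (v \<in> Z) + card (nbrs E Q v) \<le> 1"
  shows "potential W Z (W - Q) + 1 \<le> int (card (arcs E (W - Q) Q))"
    and "2 * potential W Z (W - Q) \<le> int (card (arcs E (W - Q) Q))"
proof -
  let ?R = "W - Q"
  let ?K = "component_in E ?R ` ?R"
  have fin: "finite ?R" using finite_W by simp
  have RV: "?R \<subseteq> V" "Q \<subseteq> V" using Q W_subset_V by auto
  have sub: "C \<subseteq> V" and bound: "potential W Z C \<le> 1" "potential W Z C + 1 \<le> int (card (arcs E C Q))"
    if C: "C \<in> ?K" for C
  proof -
    obtain x where x: "x \<in> ?R" "C = component_in E ?R x" using C by blast
    show "C \<subseteq> V" using component_in_subset[OF x(1)] x(2) RV by blast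
    show "potential W Z C \<le> 1" "potential W Z C + 1 \<le> int (card (arcs E C Q))"
      using potential_component_le_1[OF Q(1,2) x(1) closed x(2)]
        potential_component_lt_arcs[OF Q(1,2) x(1) closed x(2)] by auto
  qed
  have potential: "potential W Z ?R = (\<Sum>C\<in>?K. potential W Z C)"
    unfolding potential_def by (rule sum_over_components[OF adj_sym fin])
  have "int (card (arcs E ?R Q)) = (\<Sum>v\<in>?R. int (card (nbrs E Q v)))"
    using card_arcs_eq_sum[OF RV] by simp
  also have "\<dots> = (\<Sum>C\<in>?K. \<Sum>v\<in>C. int (card (nbrs E Q v)))"
    by (rule sum_over_components[OF adj_sym fin])
  also have "\<dots> = (\<Sum>C\<in>?K. int (card (arcs E C Q)))"
    using card_arcs_eq_sum[OF sub RV(2)] by (intro sum.cong) auto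
  finally have arcs: "int (card (arcs E ?R Q)) = (\<Sum>C\<in>?K. int (card (arcs E C Q)))" .
  have "(\<Sum>C\<in>?K. potential W Z C + 1) \<le> (\<Sum>C\<in>?K. int (card (arcs E C Q)))"
    using bound by (intro sum_mono) auto
  then have sum: "potential W Z ?R + int (card ?K) \<le> int (card (arcs E ?R Q))"
    using potential arcs by (simp add: sum.distrib)
  moreover have "potential W Z ?R \<le> int (card ?K)"
    unfolding potential using bound sum_mono[of ?K "potential W Z" "\<lambda>_. 1"] by simp
  moreover have "card ?K \<ge> 1" using fin Q(3) by (simp add: Suc_le_eq card_gt_0_iff)
  ultimately show "potential W Z ?R + 1 \<le> int (card (arcs E ?R Q))"
    and "2 * potential W Z ?R \<le> int (card (arcs E ?R Q))" by linarith+
qed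

lemma unmarked: "W \<inter> Z = {}"
proof (rule ccontr)
  assume "W \<inter> Z \<noteq> {}"
  then obtain w where "w \<in> W" "w \<in> Z" by blast
  then obtain Q where Q: "Q \<subseteq> W" "w \<in> Q" "connected_on E Q"
    and dense: "int (card (arcs E Q Q)) + 2 * int (card (Q \<inter> Z)) \<ge> 4 * int (card Q) - 2"
    and closed: "\<And>v. v \<in> W - Q \<Longrightarrow> of_bool (v \<in> Z) + card (nbrs E Q v) \<le> 1"
    using saturated_subgraph_exists[OF W_subset_V] by metis
  have QV: "Q \<subseteq> V" "W - Q \<subseteq> V" and finQ: "finite Q"
    using Q W_subset_V finite_W finite_subset by auto
  have tree_bound: "card (arcs E Q Q) \<ge> 2 * (card Q - 1)"
    using card_arcs_connected_ge[OF adj_sym finQ Q(3)] .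
  have "card (arcs E Q W) = card (arcs E Q Q) + card (arcs E (W - Q) Q)"
    using card_arcs_Un_right[of Q Q "W - Q"] card_arcs_commute[of Q "W - Q"] QV Q(1)
    by (simp add: Un_absorb1)
  then have potential_Q:
    "potential W Z Q = 3 * int (card Q) - int (card (arcs E Q Q)) - int (card (arcs E (W - Q) Q))
      - int (card (Q \<inter> Z))"
    using potential_eq[OF QV(1) W_subset_V] by simp
  have "card Q \<ge> 1" using Q(2) finQ by (auto simp: Suc_le_eq card_gt_0_iff)
  show False
  proof (cases "Q = W")
    case True
    have "card (Q \<inter> Z) \<le> card Q" using finQ by (simp add: card_mono)
    then have "card (Q \<inter> Z) = card Q" and arcs: "card (arcs E Q Q) = 2 * (card Q - 1)"
      using potential_W potential_Q dense tree_bound True \<open>card Q \<ge> 1\<close> by auto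
    then have "Q \<subseteq> Z" using card_subset_eq[OF finQ, of "Q \<inter> Z"] by blast
    then have "good_tree W Z W"
      using True Q(3) arcs by (auto simp: good_tree_def nbrs_def)
    then show False using no_good_tree by blast
  next
    case False
    then have "W - Q \<noteq> {}" using Q(1) by blast
    then have "potential W Z (W - Q) + 1 \<le> int (card (arcs E (W - Q) Q))"
      using potential_outside_bound(1)[OF Q(1) _ _ closed] Q(2) by blast
    moreover have "potential W Z W = potential W Z Q + potential W Z (W - Q)"
      using potential_Un[of Q "W - Q"] finQ finite_W Q(1) by (simp add: Un_absorb1)
    ultimately show False using potential_W potential_Q dense tree_bound \<open>card Q \<ge> 1\<close> by linarith
  qed
qed

lemma degree_le_2:
  assumes f: "f \<in> W"
  shows "degree W E f \<le> 2"
proof (rule ccontr)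
  assume "\<not> ?thesis"
  then have "nbrs E W f \<noteq> {}" by (auto simp: degree_eq_card_nbrs)
  then have "W - {f} \<noteq> {}" using adj_irrefl by (auto simp: nbrs_def)
  moreover have "of_bool (v \<in> Z) + card (nbrs E {f} v) \<le> 1" if "v \<in> W - {f}" for v
    using that unmarked card_mono[OF _ nbrs_subset, of "{f}" E v] by auto
  ultimately have "2 * potential W Z (W - {f}) \<le> int (card (arcs E (W - {f}) {f}))"
    using potential_outside_bound(2)[of "{f}"] f by blast
  also have "card (arcs E (W - {f}) {f}) = degree W E f"
  proof -
    have "nbrs E (W - {f}) f = nbrs E W f" using adj_irrefl by (auto simp: nbrs_def)
    then show ?thesis
      using card_arcs_commute[of "W - {f}" "{f}"] card_arcs_singleton[of f "W - {f}"]
        f W_subset_V by (auto simp: degree_eq_card_nbrs)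
  qed
  moreover have "potential W Z W = potential W Z {f} + potential W Z (W - {f})"
    using potential_Un[of "{f}" "W - {f}"] finite_W f by (simp add: insert_absorb)
  moreover have "potential W Z {f} = 3 - int (degree W E f)"
    using unmarked f by (auto simp: potential_def)
  ultimately show False using potential_W \<open>\<not> degree W E f \<le> 2\<close> by linarith
qed

text \<open>Now \<open>W\<close> is unmarked and \<open>2\<close>-regular, so any edge is a good tree.\<close>
lemma impossible: False
proof -
  have deg2: "degree W E v = 2" if "v \<in> W" for v
    using degree_ge_2[OF that] degree_le_2[OF that] by simp
  obtain v where v: "v \<in> W" using connected_W by (auto simp: connected_on_iff_reach_in)
  have "nbrs E W v \<noteq> {}" using deg2[OF v] by (auto simp: degree_eq_card_nbrs)
  then obtain u where u: "u \<in> W" "E v u" by (auto simp: nbrs_def)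
  have uv: "u \<noteq> v" using u adj_irrefl by blast
  have "card (nbrs E (W - {u, v}) y) = 1" if y: "y \<in> {u, v}" for y
  proof -
    have "{u, v} - {y} \<subseteq> nbrs E W y" using y u v adj_sym[OF u(2)] by (auto simp: nbrs_def)
    moreover have "nbrs E (W - {u, v}) y = nbrs E W y - ({u, v} - {y})"
      using adj_irrefl by (auto simp: nbrs_def)
    moreover have "card ({u, v} - {y}) = 1" using y uv by auto
    moreover have "card (nbrs E W y) = 2" using deg2[of y] y u v by (auto simp: degree_eq_card_nbrs)
    ultimately show ?thesis by (simp add: card_Diff_subset)
  qed
  moreover have "arcs E {u, v} {u, v} = {(u, v), (v, u)}"
    using u adj_sym[OF u(2)] adj_irrefl by (auto simp: arcs_def)
  moreover have "connected_on E {u, v}"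
    using connected_on_insert[OF connected_on_singleton[of E v], of v u] u adj_sym[OF u(2)]
    by (simp add: insert_commute)
  ultimately have "good_tree W Z {u, v}"
    using u v uv unmarked by (auto simp: good_tree_def)
  then show False using no_good_tree by blast
qed

end

theorem (in sgraph) admissible_has_good_tree:
  assumes "admissible W Z" "potential W Z W \<ge> 2"
  shows "\<exists>T. good_tree W Z T"
  using assms
proof (induction "card W" arbitrary: W Z rule: less_induct)
  case less
  show ?case
  proof (rule ccontr)
    assume "\<nexists>T. good_tree W Z T"
    then interpret minimal_counterexample V E W Z
      using less by unfold_locales auto
    show False by (rule impossible)
  qed
qed

context sgraph
begin

lemma card_nbrs_delete_vertex:
  assumes U: "U \<subseteq> V" "v\<^sub>0 \<in> U" and v: "v \<in> V" "v \<noteq> v\<^sub>0"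
  shows "card (nbrs E U v) = card (nbrs E (U - {v\<^sub>0}) v) + of_bool (v \<in> nbrs E V v\<^sub>0)"
proof -
  have "v \<in> nbrs E V v\<^sub>0 \<longleftrightarrow> E v v\<^sub>0"
    unfolding nbrs_def using v adj_sym by blast
  then have "card (nbrs E {v\<^sub>0} v) = of_bool (v \<in> nbrs E V v\<^sub>0)"
    by (simp add: nbrs_def Collect_conj_eq Int_def[symmetric])
  moreover have "nbrs E U v = nbrs E ((U - {v\<^sub>0}) \<union> {v\<^sub>0}) v" using U(2) by (simp add: insert_absorb)
  moreover have "card (nbrs E ((U - {v\<^sub>0}) \<union> {v\<^sub>0}) v) = card (nbrs E (U - {v\<^sub>0}) v) + card (nbrs E {v\<^sub>0} v)"
    using U by (intro card_nbrs_Un) auto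
  ultimately show ?thesis by simp
qed

lemma potential_delete_vertex:
  assumes "v\<^sub>0 \<in> V"
  shows "potential (V - {v\<^sub>0}) (nbrs E V v\<^sub>0) (V - {v\<^sub>0}) = (\<Sum>v\<in>V - {v\<^sub>0}. 3 - int (degree V E v))"
  unfolding potential_def degree_eq_card_nbrs
  using card_nbrs_delete_vertex[of V v\<^sub>0] assms by (intro sum.cong) auto

lemma sum_three_minus_degree_pos:
  assumes "avg_degree V E < 3" "V \<noteq> {}"
  shows "(\<Sum>v\<in>V. 3 - int (degree V E v)) \<ge> 1"
proof -
  have "2 * real (num_edges V E) < 3 * real (card V)"
    using assms finite_V by (simp add: avg_degree_def divide_less_eq card_gt_0_iff)
  then have "int (card (arcs E V V)) < 3 * int (card V)"
    using card_arcs_V by linarith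
  moreover have "(\<Sum>v\<in>V. int (degree V E v)) = int (card (arcs E V V))"
    using card_arcs_eq_sum[of V V] by (simp add: degree_eq_card_nbrs)
  ultimately show ?thesis by (simp add: sum_subtractf)
qed

lemma potential_delete_max_degree:
  assumes v\<^sub>0: "v\<^sub>0 \<in> V" and max: "\<And>v. v \<in> V \<Longrightarrow> degree V E v \<le> degree V E v\<^sub>0"
    and pos: "(\<Sum>v\<in>V. 3 - int (degree V E v)) \<ge> 1"
    and degree_2: "card {v \<in> V. degree V E v = 2} \<ge> 2" and big: "card V > 2"
  shows "potential (V - {v\<^sub>0}) (nbrs E V v\<^sub>0) (V - {v\<^sub>0}) \<ge> 2"
proof -
  let ?S = "\<Sum>v\<in>V - {v\<^sub>0}. 3 - int (degree V E v)"
  have split: "(\<Sum>v\<in>V. 3 - int (degree V E v)) = 3 - int (degree V E v\<^sub>0) + ?S"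
    using sum.remove[OF finite_V v\<^sub>0] .
  have "?S \<ge> 2"
  proof (cases "degree V E v\<^sub>0 \<ge> 4")
    case True
    then show ?thesis using pos split by simp
  next
    case False
    let ?D = "(V - {v\<^sub>0}) \<inter> {v. degree V E v \<le> 2}"
    have "?S \<ge> (\<Sum>v\<in>V - {v\<^sub>0}. of_bool (degree V E v \<le> 2))"
    proof (rule sum_mono)
      fix v assume "v \<in> V - {v\<^sub>0}"
      then show "of_bool (degree V E v \<le> 2) \<le> 3 - int (degree V E v)"
        using max[of v] False by (cases "degree V E v \<le> 2") auto
    qed
    then have "?S \<ge> int (card ?D)" using finite_V by simp
    moreover have "card ?D \<ge> 2"
    proof (cases "degree V E v\<^sub>0 = 3")
      case True
      then have "{v \<in> V. degree V E v = 2} \<subseteq> ?D" by auto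
      moreover have "finite ?D" using finite_V by simp
      ultimately show ?thesis using degree_2 card_mono[of ?D "{v \<in> V. degree V E v = 2}"] by linarith
    next
      case False
      with \<open>\<not> degree V E v\<^sub>0 \<ge> 4\<close> have "degree V E v \<le> 2" if "v \<in> V" for v
        using max[OF that] by simp
      then have "?D = V - {v\<^sub>0}" by auto
      then show ?thesis using big v\<^sub>0 finite_V by simp
    qed
    ultimately show ?thesis by linarith
  qed
  then show ?thesis using potential_delete_vertex[OF v\<^sub>0] by simp
qed

lemma good_tree_delete_vertex:
  assumes v\<^sub>0: "v\<^sub>0 \<in> V" and T: "good_tree (V - {v\<^sub>0}) (nbrs E V v\<^sub>0) T"
  shows "T \<subseteq> V" "induced_tree E T" "\<forall>v\<in>T. card {w \<in> V - T. E v w} = 1"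
proof -
  show TV: "T \<subseteq> V" using T by (auto simp: good_tree_def)
  show "induced_tree E T"
    using T finite_if_subset_V[OF TV] by (intro induced_tree_if_card_arcs[OF adj_sym]) (auto simp: good_tree_def)
  have "card (nbrs E (V - T) v) = 1" if v: "v \<in> T" for v
  proof -
    have "v\<^sub>0 \<notin> T" "v \<noteq> v\<^sub>0" using T v by (auto simp: good_tree_def)
    then have "card (nbrs E (V - T) v) = card (nbrs E (V - T - {v\<^sub>0}) v) + of_bool (v \<in> nbrs E V v\<^sub>0)"
      using v\<^sub>0 v TV by (intro card_nbrs_delete_vertex) auto
    also have "V - T - {v\<^sub>0} = V - {v\<^sub>0} - T" by blast
    finally have "card (nbrs E (V - T) v) = card (nbrs E (V - {v\<^sub>0} - T) v) + of_bool (v \<in> nbrs E V v\<^sub>0)" .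
    then show ?thesis using good_tree_boundary[OF T v] by simp
  qed
  then show "\<forall>v\<in>T. card {w \<in> V - T. E v w} = 1" by (simp add: nbrs_def)
qed

lemma admissible_delete_vertex:
  assumes "k_connected 2 V E" "v\<^sub>0 \<in> V"
  shows "admissible (V - {v\<^sub>0}) Z"
proof -
  have "connected_on E (V - {v\<^sub>0})" "card V > 2"
    using assms by (auto simp: k_connected_def)
  then show ?thesis using assms(2) finite_V by (auto simp: admissible_def)
qed

end

theorem mainTheorem9:
  fixes V :: "'a set" and E :: "'a \<Rightarrow> 'a \<Rightarrow> bool"
  assumes "simple_graph V E"
    and "k_connected 2 V E"
    and "avg_degree V E < 3"
    and "card {v \<in> V. degree V E v = 2} \<ge> 2"
  shows "\<exists>T. T \<subseteq> V \<and> induced_tree E T \<and>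
           (\<forall>v \<in> T. card {w \<in> V - T. E v w} = 1)"
proof -
  interpret sgraph V E using assms(1) by (rule sgraph.intro)
  have big: "card V > 2" using assms(2) by (simp add: k_connected_def)
  then have "V \<noteq> {}" by auto
  obtain v\<^sub>0 where v\<^sub>0: "v\<^sub>0 \<in> V" and "Max (degree V E ` V) = degree V E v\<^sub>0"
    using obtains_MAX[OF finite_V \<open>V \<noteq> {}\<close>] .
  then have max: "degree V E v \<le> degree V E v\<^sub>0" if "v \<in> V" for v
    using Max_ge[OF finite_imageI[OF finite_V], of "degree V E v" "degree V E"] that by simp
  have "potential (V - {v\<^sub>0}) (nbrs E V v\<^sub>0) (V - {v\<^sub>0}) \<ge> 2"
    using v\<^sub>0 max sum_three_minus_degree_pos[OF assms(3) \<open>V \<noteq> {}\<close>] assms(4) big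
    by (rule potential_delete_max_degree)
  with admissible_delete_vertex[OF assms(2) v\<^sub>0] obtain T
    where "good_tree (V - {v\<^sub>0}) (nbrs E V v\<^sub>0) T"
    using admissible_has_good_tree by blast
  from good_tree_delete_vertex[OF v\<^sub>0 this] show ?thesis by blast
qed

end
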